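(* Let $G$ be a proper interval graph on vertex set $[n]$, labeled so that for all $i<j$, $\{i,j\}\in E(G)$ implies the induced subgraph on $\{i,\dots,j\}$ is a clique, and let $t\ge2$, $I=I_t(G)$. Then $I$ satisfies the $\ell$-exchange property with respect to the sorting order, namely: let $u_1,\dots,u_N$ and $v_1,\dots,v_N$ be elements of $\mathcal{G}(I)$ such that $(u_i,u_j)$ and $(v_i,v_j)$ are sorted pairs for all $i<j$, and suppose that for some $q\le n-1$ one has $\deg_{x_r}(u_1\cdots u_N)=\deg_{x_r}(v_1\cdots v_N)$ for $r=1,\dots,q-1$ and $\deg_{x_q}(u_1\cdots u_N)<\deg_{x_q}(v_1\cdots v_N)$. Then there exist an index $k$ and an integer $j$ with $q<j\le n$ and $x_j\in\mathrm{supp}(u_k)$ such that $x_q u_k/x_j\in I$.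
   Context: $I_t(G)\subset K[x_1,\dots,x_n]$ is the ideal generated by all squarefree monomials $x_{i_1}\cdots x_{i_t}$ with $\{i_1,\dots,i_t\}$ an independent set of $G$; $\mathcal{G}(I)$ is its minimal monomial generating set. For monomials $u,v$ of degree $d$, write $uv=x_{i_1}\cdots x_{i_{2d}}$ with $i_1\le\cdots\le i_{2d}$, and set $\mathrm{sort}(u,v)=(x_{i_1}x_{i_3}\cdots x_{i_{2d-1}},\ x_{i_2}x_{i_4}\cdots x_{i_{2d}})$; $(u,v)$ is a sorted pair if $\mathrm{sort}(u,v)=(u,v)$. (With respect to the sorting order on $T=K[y_u:u\in\mathcal{G}(I)]$, the standard monomials of the toric ideal of $K[u:u\in\mathcal{G}(I)]$ are exactly the products $y_{u_1}\cdots y_{u_N}$ with $(u_i,u_j)$ sorted for all $i<j$, which is the form used above.) A proper interval graph is a graph whose vertices can be assigned real intervals, none properly containing another, such that two vertices are adjacent iff their intervals intersect; such a labeling of the vertices exists for every proper interval graph. *)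

theory Defs
  imports Complex_Main "HOL-Library.Multiset"
begin

text \<open>Monomials in K[x_1..x_n] are represented by their exponent multisets
  over variable indices: a monomial is a nat multiset, x_i corresponds to i.\<close>

definition simple_graph_on :: "nat \<Rightarrow> (nat \<Rightarrow> nat \<Rightarrow> bool) \<Rightarrow> bool" where
  "simple_graph_on n adj \<longleftrightarrow>
     (\<forall>i j. adj i j \<longrightarrow> adj j i) \<and> (\<forall>i. \<not> adj i i) \<and>
     (\<forall>i j. adj i j \<longrightarrow> i \<in> {1..n} \<and> j \<in> {1..n})"

definition proper_interval_graph :: "nat \<Rightarrow> (nat \<Rightarrow> nat \<Rightarrow> bool) \<Rightarrow> bool" where
  "proper_interval_graph n adj \<longleftrightarrow>
     (\<exists>a b :: nat \<Rightarrow> real.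
        (\<forall>i\<in>{1..n}. a i \<le> b i) \<and>
        (\<forall>i\<in>{1..n}. \<forall>j\<in>{1..n}. \<not> ({a i..b i} \<subset> {a j..b j})) \<and>
        (\<forall>i\<in>{1..n}. \<forall>j\<in>{1..n}. i \<noteq> j \<longrightarrow>
            (adj i j \<longleftrightarrow> {a i..b i} \<inter> {a j..b j} \<noteq> {})))"

definition proper_interval_labeling :: "nat \<Rightarrow> (nat \<Rightarrow> nat \<Rightarrow> bool) \<Rightarrow> bool" where
  "proper_interval_labeling n adj \<longleftrightarrow>
     (\<forall>i\<in>{1..n}. \<forall>j\<in>{1..n}. i < j \<longrightarrow> adj i j \<longrightarrow>
        (\<forall>k\<in>{i..j}. \<forall>l\<in>{i..j}. k \<noteq> l \<longrightarrow> adj k l))"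

definition independent_set :: "nat \<Rightarrow> (nat \<Rightarrow> nat \<Rightarrow> bool) \<Rightarrow> nat set \<Rightarrow> bool" where
  "independent_set n adj S \<longleftrightarrow> S \<subseteq> {1..n} \<and> (\<forall>i\<in>S. \<forall>j\<in>S. \<not> adj i j)"

definition gens_It :: "nat \<Rightarrow> (nat \<Rightarrow> nat \<Rightarrow> bool) \<Rightarrow> nat \<Rightarrow> nat multiset set" where
  "gens_It n adj t = {mset_set S | S. independent_set n adj S \<and> card S = t}"

definition in_It :: "nat \<Rightarrow> (nat \<Rightarrow> nat \<Rightarrow> bool) \<Rightarrow> nat \<Rightarrow> nat multiset \<Rightarrow> bool" where
  "in_It n adj t w \<longleftrightarrow> (\<exists>g\<in>gens_It n adj t. g \<subseteq># w)"

text \<open>sort(u,v): sort the variables of uv and split into odd/even positions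
  (positions 1,3,5,... are list indices 0,2,4,...).\<close>
definition sort_pair :: "nat multiset \<Rightarrow> nat multiset \<Rightarrow> nat multiset \<times> nat multiset" where
  "sort_pair u v = (let xs = sorted_list_of_multiset (u + v) in
     (mset (nths xs {i. even i}), mset (nths xs {i. odd i})))"

definition sorted_pair :: "nat multiset \<Rightarrow> nat multiset \<Rightarrow> bool" where
  "sorted_pair u v \<longleftrightarrow> sort_pair u v = (u, v)"

end

theory Submission
  imports Defs
begin

text \<open>For every threshold c, the numbers of variables below c in the generators of a sorted
  sequence u_1, ..., u_N decrease by at most one along the sequence, so each of them is
  determined by the total number of variables below c in u_1...u_N. Hence the equal degrees
  below x_q force u_k and v_k to agree below x_q for every k, and the inequality in x_q produces
  a k with x_q dividing v_k but not u_k. Since u_k and v_k have the same degree, u_k has a variable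
  above x_q; exchanging the smallest one, x_j, for x_q keeps the support independent: vertices
  below q lie in the independent set of v_k together with q, and a vertex y > j adjacent to q
  would be adjacent to j, because {q..y} is a clique.\<close>

definition count_less :: "nat \<Rightarrow> nat multiset \<Rightarrow> nat" where
  "count_less c M = size (filter_mset (\<lambda>x. x < c) M)"

lemma count_less_mset: "count_less c (mset xs) = length (filter (\<lambda>x. x < c) xs)"
  unfolding count_less_def by (metis mset_filter size_mset)

lemma count_less_Suc: "count_less (Suc r) M = count_less r M + count M r"
proof -
  have "filter_mset (\<lambda>x. x < Suc r) M = filter_mset (\<lambda>x. x < r) M + replicate_mset (count M r) r"
    by (rule multiset_eqI) auto
  then show ?thesis unfolding count_less_def by simp
qed

lemma count_less_cong:
  assumes "\<forall>r<c. count M r = count M' r"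
  shows "count_less c M = count_less c M'"
proof -
  have "filter_mset (\<lambda>x. x < c) M = filter_mset (\<lambda>x. x < c) M'"
    using assms by (intro multiset_eqI) simp
  then show ?thesis unfolding count_less_def by simp
qed

lemma count_less_sum_list: "count_less c (sum_list Ms) = (\<Sum>i<length Ms. count_less c (Ms ! i))"
proof -
  have "count_less c (sum_list Ms) = sum_list (map (count_less c) Ms)"
    by (induction Ms) (auto simp: count_less_def)
  then show ?thesis by (simp add: sum_list_sum_nth atLeast0LessThan)
qed

lemma count_sum_list: "count (sum_list Ms) r = (\<Sum>i<length Ms. count (Ms ! i) r)"
proof -
  have "count (sum_list Ms) r = sum_list (map (\<lambda>M. count M r) Ms)"
    by (induction Ms) auto
  then show ?thesis by (simp add: sum_list_sum_nth atLeast0LessThan)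
qed

lemma count_sum_list_less_nth:
  assumes "length Ms = length Ms'" "count (sum_list Ms) r < count (sum_list Ms') r"
  obtains k where "k < length Ms" "count (Ms ! k) r < count (Ms' ! k) r"
proof -
  have "\<exists>k<length Ms. count (Ms ! k) r < count (Ms' ! k) r"
  proof (rule ccontr)
    assume "\<not> ?thesis"
    then have "(\<Sum>i<length Ms. count (Ms' ! i) r) \<le> (\<Sum>i<length Ms. count (Ms ! i) r)"
      by (intro sum_mono) (metis lessThan_iff not_less)
    with assms show False by (simp add: count_sum_list)
  qed
  with that show ?thesis by blast
qed

lemma length_filter_less_nths_even_odd:
  assumes "sorted xs"
  shows "length (filter (\<lambda>x. x < c) (nths xs {i. even i})) = (length (filter (\<lambda>x. x < c) xs) + 1) div 2
    \<and> length (filter (\<lambda>x. x < c) (nths xs {i. odd i})) = length (filter (\<lambda>x. x < c) xs) div 2"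
  using assms
proof (induction xs)
  case Nil
  then show ?case by simp
next
  case (Cons x xs)
  have parity: "{j. Suc j \<in> {i::nat. even i}} = {i. odd i}" "{j. Suc j \<in> {i::nat. odd i}} = {i. even i}"
    by auto
  show ?case
  proof (cases "x < c")
    case True
    then show ?thesis using Cons by (simp add: nths_Cons parity)
  next
    case False
    with Cons.prems have "\<forall>y\<in>set xs. \<not> y < c" by auto
    then have "filter (\<lambda>x. x < c) (nths xs A) = []" "filter (\<lambda>x. x < c) xs = []" for A
      by (auto simp: filter_empty_conv dest: set_nths_subset[THEN subsetD])
    with False show ?thesis by (simp add: nths_Cons parity)
  qed
qed

lemma sorted_pair_count_less:
  assumes "sorted_pair u v"
  shows "count_less c v \<le> count_less c u \<and> count_less c u \<le> count_less c v + 1"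
proof -
  define xs where "xs = sorted_list_of_multiset (u + v)"
  have "u = mset (nths xs {i. even i})" "v = mset (nths xs {i. odd i})"
    using assms unfolding sorted_pair_def sort_pair_def xs_def Let_def by auto
  moreover have "sorted xs" unfolding xs_def by simp
  ultimately show ?thesis
    using length_filter_less_nths_even_odd[of xs c] by (auto simp: count_less_mset)
qed

lemma nearly_constant_decreasing_nth:
  fixes f :: "nat \<Rightarrow> nat"
  assumes step: "\<And>i j. i < j \<Longrightarrow> j < N \<Longrightarrow> f j \<le> f i \<and> f i \<le> f j + 1" and k: "k < N"
  shows "f k = (sum f {..<N} + N - 1 - k) div N"
proof -
  have above: "f k \<le> f i + (if k < i then 1 else 0)"
    and below: "f i \<le> f k + (if i < k then 1 else 0)" if "i < N" for i
    using step[of i k] step[of k i] that k by (cases "i < k"; cases "k < i"; simp)+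
  have "(\<Sum>i<N. f k) \<le> (\<Sum>i<N. f i + (if k < i then 1 else 0))"
    using above by (intro sum_mono) simp
  also have "\<dots> = sum f {..<N} + card {i. i < N \<and> k < i}"
    by (simp add: sum.distrib sum.If_cases Int_def conj_commute)
  also have "{i. i < N \<and> k < i} = {k<..<N}" by auto
  finally have lower: "N * f k \<le> sum f {..<N} + N - 1 - k"
    using k by simp
  have "sum f {..<N} \<le> (\<Sum>i<N. f k + (if i < k then 1 else 0))"
    using below by (intro sum_mono) simp
  also have "\<dots> = N * f k + card {i. i < N \<and> i < k}"
    by (simp add: sum.distrib sum.If_cases Int_def conj_commute)
  also have "{i. i < N \<and> i < k} = {..<k}" using k by auto
  finally have "sum f {..<N} \<le> N * f k + k" by simp
  with k have upper: "sum f {..<N} + N - 1 - k < N * Suc (f k)" by simp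
  show ?thesis by (rule sym, rule div_nat_eqI[OF lower upper])
qed

lemma sorted_sequence_count_less_nth:
  assumes "\<forall>i j. i < j \<and> j < length us \<longrightarrow> sorted_pair (us ! i) (us ! j)" "k < length us"
  shows "count_less c (us ! k) = (count_less c (sum_list us) + length us - 1 - k) div length us"
  unfolding count_less_sum_list
  using assms by (intro nearly_constant_decreasing_nth sorted_pair_count_less) auto

lemma sorted_sequences_count_eq:
  assumes "length us = length vs"
    and "\<forall>i j. i < j \<and> j < length us \<longrightarrow> sorted_pair (us ! i) (us ! j)"
    and "\<forall>i j. i < j \<and> j < length vs \<longrightarrow> sorted_pair (vs ! i) (vs ! j)"
    and "\<forall>r<q. count (sum_list us) r = count (sum_list vs) r"
    and "k < length us" "r < q"
  shows "count (us ! k) r = count (vs ! k) r"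
proof -
  have "count_less c (us ! k) = count_less c (vs ! k)" if "c \<le> q" for c
    using assms that count_less_cong[of c "sum_list us" "sum_list vs"]
    by (simp add: sorted_sequence_count_less_nth)
  then show ?thesis
    using count_less_Suc[of r] \<open>r < q\<close> by (metis Suc_leI add_left_cancel less_imp_le)
qed

lemma independent_set_exchange:
  assumes graph: "simple_graph_on n adj" and lab: "proper_interval_labeling n adj"
    and U: "independent_set n adj U" and V: "independent_set n adj V"
    and "card U = card V" "q \<in> V" "q \<notin> U"
    and below: "\<forall>x<q. x \<in> U \<longleftrightarrow> x \<in> V"
  obtains j where "j \<in> U" "q < j" "independent_set n adj (insert q (U - {j}))"
proof -
  have fin: "finite U" "finite V" and sub: "U \<subseteq> {1..n}" "V \<subseteq> {1..n}"
    using U V unfolding independent_set_def by (auto intro: finite_subset)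
  have "\<exists>x\<in>U. q < x"
  proof (rule ccontr)
    assume "\<not> ?thesis"
    then have "U \<subseteq> V - {q}"
      using below \<open>q \<notin> U\<close> by (metis DiffI linorder_neqE_nat singletonD subsetI)
    then have "card U < card V"
      using fin \<open>q \<in> V\<close> by (metis card_Diff1_less card_mono finite_Diff le_less_trans)
    with \<open>card U = card V\<close> show False by simp
  qed
  define j where "j = Min {x\<in>U. q < x}"
  have "{x\<in>U. q < x} \<noteq> {}" "finite {x\<in>U. q < x}"
    using \<open>\<exists>x\<in>U. q < x\<close> fin by auto
  then have jU: "j \<in> U" and qj: "q < j" and jmin: "\<And>x. x \<in> U \<Longrightarrow> q < x \<Longrightarrow> j \<le> x"
    unfolding j_def using Min_in Min_le by auto
  have indep: "\<And>a b. a \<in> U \<Longrightarrow> b \<in> U \<Longrightarrow> \<not> adj a b" "\<And>a b. a \<in> V \<Longrightarrow> b \<in> V \<Longrightarrow> \<not> adj a b"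
    using U V unfolding independent_set_def by auto
  have sym: "\<And>a b. adj a b \<Longrightarrow> adj b a" and irrefl: "\<And>a. \<not> adj a a"
    using graph unfolding simple_graph_on_def by auto
  have "\<not> adj q y" if y: "y \<in> U - {j}" for y
  proof (cases "y < q")
    case True
    then show ?thesis using below y \<open>q \<in> V\<close> indep(2) by auto
  next
    case False
    with y \<open>q \<notin> U\<close> have "q < y" by (cases "y = q") auto
    with y jmin have "j < y" by fastforce
    show ?thesis
    proof
      assume "adj q y"
      have "q \<in> {1..n}" "y \<in> {1..n}" "j \<in> {1..y}"
        using \<open>q \<in> V\<close> y jU sub \<open>j < y\<close> by auto
      with lab \<open>adj q y\<close> \<open>q < y\<close> qj \<open>j < y\<close> have "adj j y"
        unfolding proper_interval_labeling_def by fastforce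
      with indep(1) jU y show False by auto
    qed
  qed
  then have "independent_set n adj (insert q (U - {j}))"
    using U \<open>q \<in> V\<close> sub irrefl sym unfolding independent_set_def by blast
  with jU qj that show ?thesis by blast
qed

lemma gens_ItE:
  assumes "g \<in> gens_It n adj t"
  obtains U where "g = mset_set U" "independent_set n adj U" "card U = t" "finite U"
  using assms unfolding gens_It_def independent_set_def by (auto intro: finite_subset)

lemma gens_It_count_zero:
  assumes "g \<in> gens_It n adj t"
  shows "count g 0 = 0"
  using assms unfolding gens_It_def independent_set_def
  by (auto simp: count_mset_set' intro: finite_subset)

lemma gens_It_exchange:
  assumes graph: "simple_graph_on n adj" and lab: "proper_interval_labeling n adj"
    and u: "u \<in> gens_It n adj t" and v: "v \<in> gens_It n adj t"
    and below: "\<forall>r<q. count u r = count v r" and at: "count u q < count v q"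
  shows "\<exists>j. q < j \<and> j \<le> n \<and> j \<in># u \<and> in_It n adj t (u - {#j#} + {#q#})"
proof -
  obtain U where U: "u = mset_set U" "independent_set n adj U" "card U = t" "finite U"
    using u by (rule gens_ItE)
  obtain V where V: "v = mset_set V" "independent_set n adj V" "card V = t" "finite V"
    using v by (rule gens_ItE)
  have "q \<in> V" "q \<notin> U" "\<forall>x<q. x \<in> U \<longleftrightarrow> x \<in> V"
    using at below U V by (auto simp: count_mset_set' split: if_splits)
  with U V obtain j where j: "j \<in> U" "q < j" "independent_set n adj (insert q (U - {j}))"
    by (metis graph lab independent_set_exchange)
  have "u - {#j#} + {#q#} = mset_set (insert q (U - {j}))"
    using U(1,4) j(1) \<open>q \<notin> U\<close> by (simp add: mset_set_Diff)
  moreover have "card (insert q (U - {j})) = t"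
    using card.remove[OF U(4) j(1)] U(3,4) \<open>q \<notin> U\<close> by simp
  ultimately have "in_It n adj t (u - {#j#} + {#q#})"
    unfolding in_It_def gens_It_def using j(3) by auto
  moreover have "j \<le> n" "j \<in># u"
    using U j(1) unfolding independent_set_def by auto
  ultimately show ?thesis using j(2) by blast
qed

theorem proposition2p4:
  fixes n t q N :: nat and adj :: "nat \<Rightarrow> nat \<Rightarrow> bool"
    and us vs :: "nat multiset list"
  assumes graph: "simple_graph_on n adj"
    and pig: "proper_interval_graph n adj"
    and lab: "proper_interval_labeling n adj"
    and t2: "t \<ge> 2"
    and len: "length us = N" "length vs = N"
    and ugen: "\<forall>i<N. us ! i \<in> gens_It n adj t"
    and vgen: "\<forall>i<N. vs ! i \<in> gens_It n adj t"
    and usort: "\<forall>i j. i < j \<and> j < N \<longrightarrow> sorted_pair (us ! i) (us ! j)"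
    and vsort: "\<forall>i j. i < j \<and> j < N \<longrightarrow> sorted_pair (vs ! i) (vs ! j)"
    and q: "1 \<le> q" "q \<le> n - 1"
    and eqdeg: "\<forall>r. 1 \<le> r \<and> r < q \<longrightarrow> count (sum_list us) r = count (sum_list vs) r"
    and ltdeg: "count (sum_list us) q < count (sum_list vs) q"
  shows "\<exists>k<N. \<exists>j. q < j \<and> j \<le> n \<and> j \<in># us ! k \<and>
           in_It n adj t (us ! k - {#j#} + {#q#})"
proof -
  \<comment> \<open>The labeling alone drives the exchange.\<close>
  have "count (sum_list us) 0 = 0" "count (sum_list vs) 0 = 0"
    using ugen vgen len by (auto simp: count_sum_list gens_It_count_zero)
  with eqdeg have eq_below: "\<forall>r<q. count (sum_list us) r = count (sum_list vs) r"
    by (metis less_one not_less)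
  obtain k where k: "k < N" "count (us ! k) q < count (vs ! k) q"
    using count_sum_list_less_nth[OF _ ltdeg] len by metis
  have "\<forall>r<q. count (us ! k) r = count (vs ! k) r"
    using sorted_sequences_count_eq[OF _ _ _ eq_below] len usort vsort k(1) by simp
  with gens_It_exchange[OF graph lab] ugen vgen k show ?thesis by blast
qed

end
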